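(* Let $F=H_{(44/31,44/31,3)}:\mathbb{C}^2\to\mathbb{C}^2$ be the map $F(x,y)=\left(x^6+\frac{44}{31}y^3-y,\ y^6+\frac{44}{31}x^3-x\right)$. For $z=(z_1,z_2)\in\mathbb{C}^2$ (at which the matrix below is invertible) let $$M_{-1}(z)=\begin{bmatrix}6z_1^5 & \frac{132}{31}z_2^2-1\\ \frac{132}{31}z_1^2-1 & 6z_2^5\end{bmatrix}^{-1},$$ and for $k\in\{2,\dots,6\}$ let $$M_k(z)=\begin{bmatrix}\binom{6}{k}z_1^{6-k} & \frac{44}{31}\binom{3}{k}z_2^{3-k}\\ \frac{44}{31}\binom{3}{k}z_1^{3-k} & \binom{6}{k}z_2^{6-k}\end{bmatrix},$$ where $\binom{j}{i}=0$ when $i\notin\{0,\dots,j\}$. If $$\sigma\big(M_{-1}(z)M_k(z)\big)<\left(\frac{0.03}{|M_{-1}(z)F(z)|}\right)^{k-1}\quad\text{for all }k\in\{2,\dots,6\},$$ then $\alpha(F,z)<0.03$.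
   Context: For a square matrix $M$, $\sigma(M)$ denotes its largest singular value. For $v\in\mathbb{C}^N$, $|v|=\sqrt{|v_1|^2+\cdots+|v_N|^2}$, and for a multilinear map $\mathcal{L}:(\mathbb{C}^N)^k\to\mathbb{C}^N$, $|\mathcal{L}|=\max_{v^1,\dots,v^k\neq 0}\frac{|\mathcal{L}(v^1,\dots,v^k)|}{|v^1|\cdots|v^k|}$. For an analytic $F:\mathbb{C}^n\to\mathbb{C}^n$ with Jacobian $F'$ and $k$-th derivative $F^{(k)}$ (a symmetric $k$-linear map), Smale's invariants are $\beta(F,z)=|F'(z)^{-1}F(z)|$, $\gamma(F,z)=\sup_{k\ge2}\left|\frac{1}{k!}F'(z)^{-1}F^{(k)}(z)\right|^{1/(k-1)}$, and $\alpha(F,z)=\beta(F,z)\gamma(F,z)$. *)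

theory Defs
  imports "HOL-Analysis.Analysis"
begin

text \<open>k-th derivative as a k-linear map, arguments given as a list of length k,
  via iterated Frechet derivatives.\<close>
fun kderiv :: "nat \<Rightarrow> (complex^2 \<Rightarrow> complex^2) \<Rightarrow> complex^2 \<Rightarrow> (complex^2) list \<Rightarrow> complex^2" where
  "kderiv 0 F z vs = F z"
| "kderiv (Suc k) F z vs = frechet_derivative (\<lambda>w. kderiv k F w (tl vs)) (at z) (hd vs)"

definition mlnorm :: "nat \<Rightarrow> ((complex^2) list \<Rightarrow> complex^2) \<Rightarrow> real" where
  "mlnorm k L = Sup {norm (L vs) / (\<Prod>v\<leftarrow>vs. norm v) | vs. length vs = k \<and> (\<forall>v\<in>set vs. v \<noteq> 0)}"

definition smale_beta :: "(complex^2 \<Rightarrow> complex^2) \<Rightarrow> complex^2 \<Rightarrow> real" where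
  "smale_beta F z = norm (inv (frechet_derivative F (at z)) (F z))"

definition smale_gamma :: "(complex^2 \<Rightarrow> complex^2) \<Rightarrow> complex^2 \<Rightarrow> real" where
  "smale_gamma F z = (SUP k\<in>{2..}. (mlnorm k (\<lambda>vs. (1 / fact k) *\<^sub>R
       inv (frechet_derivative F (at z)) (kderiv k F z vs))) powr (1 / (real k - 1)))"

definition smale_alpha :: "(complex^2 \<Rightarrow> complex^2) \<Rightarrow> complex^2 \<Rightarrow> real" where
  "smale_alpha F z = smale_beta F z * smale_gamma F z"

definition conj_transpose :: "complex^2^2 \<Rightarrow> complex^2^2" where
  "conj_transpose M = (\<chi> i j. cnj (M $ j $ i))"

definition sigma_max :: "complex^2^2 \<Rightarrow> real" where
  "sigma_max M = sqrt (Max {l::real. \<exists>v::complex^2. v \<noteq> 0 \<and>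
       (conj_transpose M ** M) *v v = complex_of_real l *s v})"

definition Fmap :: "complex^2 \<Rightarrow> complex^2" where
  "Fmap z = (\<chi> i. if i = 1 then (z$1)^6 + (44/31) * (z$2)^3 - z$2
                          else (z$2)^6 + (44/31) * (z$1)^3 - z$1)"

definition Jmat :: "complex^2 \<Rightarrow> complex^2^2" where
  "Jmat z = (\<chi> i j. if i = 1 then (if j = 1 then 6 * (z$1)^5 else (132/31) * (z$2)^2 - 1)
                              else (if j = 1 then (132/31) * (z$1)^2 - 1 else 6 * (z$2)^5))"

definition Mk :: "nat \<Rightarrow> complex^2 \<Rightarrow> complex^2^2" where
  "Mk k z = (\<chi> i j. if i = 1 then (if j = 1 then of_nat (6 choose k) * (z$1)^(6-k)
                                          else (44/31) * of_nat (3 choose k) * (z$2)^(3-k))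
                              else (if j = 1 then (44/31) * of_nat (3 choose k) * (z$1)^(3-k)
                                          else of_nat (6 choose k) * (z$2)^(6-k)))"

end

theory Submission
  imports Defs
begin

(* The Jacobian of F is Jmat, so beta(F,z) = |J^-1 F(z)| with J = Jmat z. Each coordinate of F
   is a sum of powers of a single variable, so for k >= 2 the k-th derivative is
   D^k F(z)(v_1,...,v_k) = k! Mk k z (v_1 o ... o v_k), where o is the componentwise product;
   in particular it vanishes for k > 6. Since |v o w| <= |v| |w| and sigma_max bounds the operator
   norm, the k-th term in gamma(F,z) is at most sigma_max (J^-1 Mk k z) ^ (1/(k-1)) < 0.03/beta,
   and as only finitely many terms are nonzero, gamma(F,z) < 0.03/beta. *)

lemma has_derivative_vec_lambda:
  fixes f :: "'n::finite \<Rightarrow> 'a::real_normed_vector \<Rightarrow> 'b::euclidean_space"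
  assumes "\<And>i. (f i has_derivative f' i) (at x within S)"
  shows "((\<lambda>x. \<chi> i. f i x) has_derivative (\<lambda>h. \<chi> i. f' i h)) (at x within S)"
proof (rule has_derivative_componentwise_within[of "\<lambda>x. \<chi> i. f i x", THEN iffD2], intro ballI)
  fix b :: "'b^'n" assume "b \<in> Basis"
  then obtain i u where "b = axis i u" by (auto simp: Basis_vec_def)
  then show "((\<lambda>x. (\<chi> i. f i x) \<bullet> b) has_derivative (\<lambda>h. (\<chi> i. f' i h) \<bullet> b)) (at x within S)"
    by (simp add: inner_axis has_derivative_inner_left assms)
qed

lemma has_derivative_vec_nth [derivative_intros]:
  "(f has_derivative f') F \<Longrightarrow> ((\<lambda>x. f x $ i) has_derivative (\<lambda>h. f' h $ i)) F"
  by (rule bounded_linear.has_derivative[OF bounded_linear_vec_nth])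

lemma binomial_mult_diff_eq: "(n choose k) * (n - k) = (n choose Suc k) * Suc k"
proof (cases n)
  case (Suc m)
  then show ?thesis
    using binomial_absorb_comp[of n k] Suc_times_binomial[of k m] by (simp add: mult.commute)
qed simp

(* The k-th derivative of x^m; in binomial form it vanishes for k > m and matches the entries of Mk. *)
definition pow_kderiv :: "nat \<Rightarrow> nat \<Rightarrow> 'a::real_normed_field \<Rightarrow> 'a" where
  "pow_kderiv m k x = of_nat (m choose k) * fact k * x ^ (m - k)"

lemma pow_kderiv_0 [simp]: "pow_kderiv m 0 x = x ^ m"
  by (simp add: pow_kderiv_def)

lemma has_derivative_pow_kderiv [derivative_intros]:
  fixes f :: "'a::real_normed_vector \<Rightarrow> 'b::real_normed_field"
  assumes "(f has_derivative f') (at x within S)"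
  shows "((\<lambda>x. pow_kderiv m k (f x)) has_derivative
           (\<lambda>h. pow_kderiv m (Suc k) (f x) * f' h)) (at x within S)"
  unfolding pow_kderiv_def
proof (rule has_derivative_eq_rhs)
  show "((\<lambda>x. of_nat (m choose k) * fact k * f x ^ (m - k)) has_derivative
     (\<lambda>h. of_nat (m choose k) * fact k * (of_nat (m - k) * f' h * f x ^ (m - k - 1)))) (at x within S)"
    by (intro derivative_intros assms)
  have coeff: "of_nat (m choose k) * of_nat (m - k) * fact k = (of_nat (m choose Suc k) * fact (Suc k) :: 'b)"
    by (simp only: fact_Suc mult.assoc[symmetric] binomial_mult_diff_eq flip: of_nat_mult)
  show "(\<lambda>h. of_nat (m choose k) * fact k * (of_nat (m - k) * f' h * f x ^ (m - k - 1))) =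
    (\<lambda>h. of_nat (m choose Suc k) * fact (Suc k) * f x ^ (m - Suc k) * f' h)"
    unfolding coeff[symmetric] by (simp add: fun_eq_iff mult_ac)
qed

definition componentwise_prod :: "('a::comm_monoid_mult^'n) list \<Rightarrow> 'a^'n" where
  "componentwise_prod vs = (\<chi> j. \<Prod>v\<leftarrow>vs. v $ j)"

lemma componentwise_prod_Cons:
  "componentwise_prod (v # vs) = (\<chi> j. v $ j * componentwise_prod vs $ j)"
  by (simp add: componentwise_prod_def)

lemma norm_vec_mult_le:
  fixes v w :: "'a::real_normed_div_algebra^'n"
  shows "norm (\<chi> j. v $ j * w $ j) \<le> norm v * norm w"
proof -
  have "norm (\<chi> j. v $ j * w $ j) = L2_set (\<lambda>j. norm (v $ j) * norm (w $ j)) UNIV"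
    by (simp add: norm_vec_def norm_mult)
  also have "\<dots> \<le> (\<Sum>j\<in>UNIV. \<bar>norm (v $ j) * norm (w $ j)\<bar>)"
    by (rule L2_set_le_sum_abs)
  also have "\<dots> = (\<Sum>j\<in>UNIV. \<bar>norm (v $ j)\<bar> * \<bar>norm (w $ j)\<bar>)"
    by (simp only: abs_mult)
  also have "\<dots> \<le> norm v * norm w"
    unfolding norm_vec_def by (rule L2_set_mult_ineq)
  finally show ?thesis .
qed

lemma norm_componentwise_prod_le:
  fixes vs :: "('a::real_normed_field^'n) list"
  assumes "vs \<noteq> []"
  shows "norm (componentwise_prod vs) \<le> (\<Prod>v\<leftarrow>vs. norm v)"
  using assms
proof (induction vs rule: list_nonempty_induct)
  case (single v)
  then show ?case by (simp add: componentwise_prod_def)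
next
  case (cons v vs)
  have "norm (componentwise_prod (v # vs)) \<le> norm v * norm (componentwise_prod vs)"
    using norm_vec_mult_le[of v "componentwise_prod vs"]
    by (simp add: componentwise_prod_Cons)
  also have "\<dots> \<le> norm v * (\<Prod>v\<leftarrow>vs. norm v)"
    using cons.IH by (simp add: mult_left_mono)
  finally show ?case by simp
qed

lemma matrix_mul_matrix_inv:
  assumes "invertible A"
  shows "A ** matrix_inv A = mat 1" "matrix_inv A ** A = mat 1"
  using someI_ex[OF assms[unfolded invertible_def]] by (simp_all add: matrix_inv_def)

lemma inv_matrix_vector_mult:
  fixes A :: "'a::field^'n^'n"
  assumes "invertible A"
  shows "inv ((*v) A) = (*v) (matrix_inv A)"
proof (rule inv_equality)
  show "matrix_inv A *v (A *v x) = x" for x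
    using assms by (simp add: matrix_vector_mul_assoc matrix_mul_matrix_inv)
  show "A *v (matrix_inv A *v y) = y" for y
    using assms by (simp add: matrix_vector_mul_assoc matrix_mul_matrix_inv)
qed

lemma matrix_vector_mult_scaleR_gen:
  fixes A :: "'a::real_algebra_1^'n^'m"
  shows "A *v (c *\<^sub>R x) = c *\<^sub>R (A *v x)"
  by (simp add: vec_eq_iff matrix_vector_mult_def scaleR_sum_right mult_scaleR_right)

lemma cmod_add_squared: "(cmod (p + q))\<^sup>2 = (cmod p)\<^sup>2 + (cmod q)\<^sup>2 + 2 * Re (cnj p * q)"
  unfolding cmod_power2 by (simp add: power2_eq_square algebra_simps)

lemma norm_vec2_squared: "(norm (x::'a::real_normed_vector^2))\<^sup>2 = (norm (x$1))\<^sup>2 + (norm (x$2))\<^sup>2"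
  by (simp add: norm_vec_def L2_set_def sum_2)

lemma two_mult_le_weighted_squares:
  fixes p q r x y :: real
  assumes "0 \<le> p" "0 \<le> q" "p * q = r\<^sup>2"
  shows "2 * r * x * y \<le> p * x\<^sup>2 + q * y\<^sup>2"
proof (cases "p = 0")
  case True
  with assms show ?thesis by simp
next
  case False
  have "p * (p * x\<^sup>2 + q * y\<^sup>2 - 2 * r * x * y) = (p * x - r * y)\<^sup>2"
    using assms(3) by (simp add: power2_eq_square algebra_simps)
  then have "0 \<le> p * (p * x\<^sup>2 + q * y\<^sup>2 - 2 * r * x * y)"
    by simp
  with False assms(1) show ?thesis
    by (simp add: zero_le_mult_iff)
qed

lemma larger_quadratic_root:
  fixes a d c :: real
  assumes "0 \<le> c"
  obtains l where "(l - a) * (l - d) = c" "a \<le> l" "d \<le> l"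
proof
  define s where "s = sqrt ((a - d)\<^sup>2 + 4 * c)"
  have "\<bar>a - d\<bar> \<le> s"
    unfolding s_def using assms by (metis real_sqrt_abs real_sqrt_le_mono le_add_same_cancel1 zero_le_mult_iff zero_le_numeral)
  then show "a \<le> (a + d + s) / 2" "d \<le> (a + d + s) / 2"
    by auto
  have "((a + d + s) / 2 - a) * ((a + d + s) / 2 - d) = (s\<^sup>2 - (a - d)\<^sup>2) / 4"
    by (simp add: field_simps power2_eq_square)
  also have "\<dots> = c"
    unfolding s_def using assms by simp
  finally show "((a + d + s) / 2 - a) * ((a + d + s) / 2 - d) = c" .
qed

context
  fixes B :: "complex^2^2" and a d :: real and b :: complex
  assumes B: "B$1$1 = of_real a" "B$1$2 = b" "B$2$1 = cnj b" "B$2$2 = of_real d"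
begin

lemma hermitian_2_eigenvector_iff:
  "B *v v = of_real m *s v \<longleftrightarrow>
    (of_real a - of_real m) * v$1 + b * v$2 = 0 \<and> cnj b * v$1 + (of_real d - of_real m) * v$2 = 0"
  by (simp add: vec_eq_iff forall_2 matrix_vector_mult_def sum_2 B algebra_simps)

lemma hermitian_2_eigenvalue_root:
  assumes "v \<noteq> 0" "B *v v = of_real m *s v"
  shows "(a - m) * (d - m) = (cmod b)\<^sup>2"
proof -
  define c where "c = (of_real a - of_real m) * (of_real d - of_real m) - b * cnj b"
  have v: "v$1 \<noteq> 0 \<or> v$2 \<noteq> 0"
    using assms(1) by (auto simp: vec_eq_iff forall_2)
  from assms(2) have e1: "(of_real a - of_real m) * v$1 + b * v$2 = 0"
    and e2: "cnj b * v$1 + (of_real d - of_real m) * v$2 = 0"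
    by (simp_all only: hermitian_2_eigenvector_iff)
  have "c * v$1 = (of_real d - of_real m) * ((of_real a - of_real m) * v$1 + b * v$2)
      - b * (cnj b * v$1 + (of_real d - of_real m) * v$2)"
    "c * v$2 = (of_real a - of_real m) * (cnj b * v$1 + (of_real d - of_real m) * v$2)
      - cnj b * ((of_real a - of_real m) * v$1 + b * v$2)"
    unfolding c_def by (simp_all add: algebra_simps)
  with v e1 e2 have "c = 0"
    by auto
  moreover have "c = of_real ((a - m) * (d - m) - (cmod b)\<^sup>2)"
    unfolding c_def by (simp flip: complex_norm_square)
  ultimately show ?thesis
    by (simp only: of_real_eq_0_iff)
qed

lemma hermitian_2_root_eigenvalue:
  assumes root: "(a - m) * (d - m) = (cmod b)\<^sup>2"
  obtains v where "v \<noteq> 0" "B *v v = of_real m *s v"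
proof (cases "b = 0")
  case False
  have "cnj b * b = of_real ((a - m) * (d - m))"
    unfolding root complex_norm_square by simp
  then have "B *v vector [b, of_real (m - a)] = of_real m *s vector [b, of_real (m - a)]"
    unfolding hermitian_2_eigenvector_iff by (simp add: algebra_simps)
  with False that show ?thesis
    by (metis vector_2(1) zero_index)
next
  case True
  with root have "m = a \<or> m = d"
    by auto
  then have "B *v vector [1, 0] = of_real m *s vector [1, 0] \<or>
      B *v vector [0, 1] = of_real m *s vector [0, 1]"
    using True unfolding hermitian_2_eigenvector_iff by auto
  with that show ?thesis
    by (metis vector_2 zero_index one_neq_zero)
qed

lemma hermitian_2_eigenvalue_iff:
  "(\<exists>v. v \<noteq> 0 \<and> B *v v = of_real m *s v) \<longleftrightarrow> (a - m) * (d - m) = (cmod b)\<^sup>2"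
  by (metis hermitian_2_eigenvalue_root hermitian_2_root_eigenvalue)

end

lemma quadratic_roots_subset:
  fixes a d l :: real
  assumes "(l - a) * (l - d) = c"
  shows "{m. (a - m) * (d - m) = c} \<subseteq> {l, a + d - l}"
proof
  fix m assume "m \<in> {m. (a - m) * (d - m) = c}"
  moreover have "(m - l) * (m - (a + d - l)) = (a - m) * (d - m) - (l - a) * (l - d)"
    by (simp add: algebra_simps)
  ultimately have "(m - l) * (m - (a + d - l)) = 0"
    using assms by simp
  then show "m \<in> {l, a + d - l}"
    by auto
qed

(* [a, b; cnj b, d] is the Gram matrix conj_transpose A ** A, and the hypotheses say that l times the
   identity minus it is positive semidefinite. *)
lemma norm_matrix_vector_mult_2_squared_le:
  fixes A :: "complex^2^2"
  defines "a \<equiv> (cmod (A$1$1))\<^sup>2 + (cmod (A$2$1))\<^sup>2"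
    and "d \<equiv> (cmod (A$1$2))\<^sup>2 + (cmod (A$2$2))\<^sup>2"
    and "b \<equiv> cnj (A$1$1) * A$1$2 + cnj (A$2$1) * A$2$2"
  assumes "a \<le> l" "d \<le> l" "(l - a) * (l - d) = (cmod b)\<^sup>2"
  shows "(norm (A *v x))\<^sup>2 \<le> l * (norm x)\<^sup>2"
proof -
  let ?x = "cmod (x$1)" and ?y = "cmod (x$2)"
  have "(norm (A *v x))\<^sup>2 = a * ?x\<^sup>2 + d * ?y\<^sup>2 + 2 * Re (b * (cnj (x$1) * x$2))"
    unfolding norm_vec2_squared a_def d_def b_def
    by (simp add: matrix_vector_mult_def sum_2 cmod_add_squared norm_mult power_mult_distrib algebra_simps)
  also have "\<dots> \<le> a * ?x\<^sup>2 + d * ?y\<^sup>2 + 2 * cmod b * ?x * ?y"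
    using complex_Re_le_cmod[of "b * (cnj (x$1) * x$2)"] by (simp add: norm_mult)
  also have "\<dots> \<le> l * (norm x)\<^sup>2"
    using two_mult_le_weighted_squares[of "l - a" "l - d" "cmod b" ?x ?y] assms(4-6)
    unfolding norm_vec2_squared by (simp add: algebra_simps)
  finally show ?thesis .
qed

lemma norm_le_sigma_max:
  fixes A :: "complex^2^2"
  shows "0 \<le> sigma_max A" "norm (A *v x) \<le> sigma_max A * norm x"
proof -
  define a where "a = (cmod (A$1$1))\<^sup>2 + (cmod (A$2$1))\<^sup>2"
  define d where "d = (cmod (A$1$2))\<^sup>2 + (cmod (A$2$2))\<^sup>2"
  define b where "b = cnj (A$1$1) * A$1$2 + cnj (A$2$1) * A$2$2"
  define E where "E = {m::real. \<exists>v::complex^2. v \<noteq> 0 \<and> (conj_transpose A ** A) *v v = of_real m *s v}"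
  have "cnj z * z = of_real ((cmod z)\<^sup>2)" for z
    using complex_norm_square[of z] by (simp add: mult.commute)
  then have E: "E = {m. (a - m) * (d - m) = (cmod b)\<^sup>2}"
    unfolding E_def
    by (intro Collect_cong hermitian_2_eigenvalue_iff)
      (simp_all add: a_def b_def d_def conj_transpose_def matrix_matrix_mult_def sum_2)
  obtain l where l: "(l - a) * (l - d) = (cmod b)\<^sup>2" "a \<le> l" "d \<le> l"
    using larger_quadratic_root[of "(cmod b)\<^sup>2" a d] by auto
  have "finite E" "l \<in> E"
    unfolding E using quadratic_roots_subset[OF l(1)] l(1)
    by (auto intro: finite_subset simp: algebra_simps)
  then have "sqrt l \<le> sqrt (Max E)"
    by simp
  also have "sqrt (Max E) = sigma_max A"
    unfolding sigma_max_def E_def ..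
  finally have sqrt_l: "sqrt l \<le> sigma_max A" .
  have "0 \<le> l"
    using l(2) unfolding a_def by (meson add_nonneg_nonneg order_trans zero_le_power2)
  then show "0 \<le> sigma_max A"
    using sqrt_l by (meson order_trans real_sqrt_ge_zero)
  have "norm (A *v x) \<le> sqrt (l * (norm x)\<^sup>2)"
    using norm_matrix_vector_mult_2_squared_le[of A l x] l unfolding a_def b_def d_def
    by (intro real_le_rsqrt) simp
  also have "\<dots> = sqrt l * norm x"
    by (simp add: real_sqrt_mult)
  also have "\<dots> \<le> sigma_max A * norm x"
    using sqrt_l by (simp add: mult_right_mono)
  finally show "norm (A *v x) \<le> sigma_max A * norm x" .
qed

lemma sigma_max_0 [simp]: "sigma_max 0 = 0"
proof -
  have "{l::real. \<exists>v::complex^2. v \<noteq> 0 \<and> (conj_transpose 0 ** 0) *v v = of_real l *s v} = {0}"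
    by (auto simp: vec_eq_iff intro!: exI[of _ "1::complex^2"])
  then show ?thesis
    by (simp add: sigma_max_def)
qed

lemma mlnorm_le:
  assumes "\<And>vs. length vs = k \<Longrightarrow> norm (L vs) \<le> c * (\<Prod>v\<leftarrow>vs. norm v)"
  shows "0 \<le> mlnorm k L" "mlnorm k L \<le> c"
proof -
  define S where "S = {norm (L vs) / (\<Prod>v\<leftarrow>vs. norm v) | vs. length vs = k \<and> (\<forall>v\<in>set vs. v \<noteq> 0)}"
  have S_bounds: "0 \<le> x \<and> x \<le> c" if "x \<in> S" for x
  proof -
    from that obtain vs where x: "x = norm (L vs) / (\<Prod>v\<leftarrow>vs. norm v)"
      and vs: "length vs = k" "\<forall>v\<in>set vs. v \<noteq> 0"
      unfolding S_def by blast
    have "0 < (\<Prod>v\<leftarrow>vs. norm v)"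
      using vs(2) by (induction vs) auto
    with assms[OF vs(1)] show ?thesis
      unfolding x by (simp add: pos_divide_le_eq)
  qed
  have x0: "norm (L (replicate k 1)) / (\<Prod>v\<leftarrow>replicate k (1::complex^2). norm v) \<in> S"
    unfolding S_def
    by (intro CollectI exI[of _ "replicate k 1"]) (simp add: vec_eq_iff set_replicate_conv_if)
  have "bdd_above S"
    using S_bounds by (intro bdd_aboveI) auto
  then have "0 \<le> Sup S"
    using S_bounds[OF x0] cSup_upper[OF x0] by linarith
  moreover have "S \<noteq> {}"
    using x0 by auto
  ultimately show "0 \<le> mlnorm k L" "mlnorm k L \<le> c"
    unfolding mlnorm_def S_def[symmetric] using S_bounds by (auto intro: cSup_least)
qed

lemma powr_inverse_less:
  fixes m X :: real
  assumes "0 \<le> m" "m < X ^ n" "0 \<le> X" "0 < n"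
  shows "m powr (1 / real n) < X"
proof -
  have "m powr (1 / real n) = root n m"
    using assms by (simp add: root_powr_inverse)
  also have "\<dots> < root n (X ^ n)"
    using assms by simp
  also have "\<dots> = X"
    using assms by (simp add: real_root_power_cancel)
  finally show ?thesis .
qed

lemma smale_gamma_less:
  assumes "0 < X"
    and bound: "\<And>k vs. 2 \<le> k \<Longrightarrow> length vs = k \<Longrightarrow>
      norm ((1 / fact k) *\<^sub>R inv (frechet_derivative F (at z)) (kderiv k F z vs))
        \<le> c k * (\<Prod>v\<leftarrow>vs. norm v)"
    and less: "\<And>k. 2 \<le> k \<Longrightarrow> c k < X ^ (k - 1)"
    and vanish: "\<And>k. n < k \<Longrightarrow> c k = 0"
  shows "smale_gamma F z < X"
proof -
  define L where "L k vs = (1 / fact k) *\<^sub>R inv (frechet_derivative F (at z)) (kderiv k F z vs)"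
    for k vs
  define g where "g k = mlnorm k (L k) powr (1 / (real k - 1))" for k
  have ml: "0 \<le> mlnorm k (L k) \<and> mlnorm k (L k) \<le> c k" if "2 \<le> k" for k
    using mlnorm_le[where L = "L k" and c = "c k" and k = k] bound[OF that] unfolding L_def by simp
  have g_less: "g k < X" if "2 \<le> k" for k
  proof -
    have "mlnorm k (L k) powr (1 / real (k - 1)) < X"
      using ml[OF that] less[OF that] assms(1) that by (intro powr_inverse_less) auto
    then show ?thesis
      unfolding g_def using that by (simp add: of_nat_diff)
  qed
  have "g ` {2..} \<subseteq> g ` {2..n} \<union> {0}"
  proof
    fix y assume "y \<in> g ` {2..}"
    then obtain k where k: "2 \<le> k" "y = g k" by auto
    have "g k = 0" if "n < k"
      unfolding g_def using ml[OF k(1)] vanish[OF that] by simp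
    then show "y \<in> g ` {2..n} \<union> {0}" using k by (cases "k \<le> n") auto
  qed
  then have "finite (g ` {2..})"
    by (rule finite_subset) simp
  moreover have "smale_gamma F z = Sup (g ` {2..})"
    unfolding smale_gamma_def g_def L_def ..
  ultimately show ?thesis
    using g_less by (simp add: cSup_eq_Max)
qed

(* Each coordinate of Fmap is a sum of powers of single coordinates, so its k-th derivative depends
   on the directions only through their componentwise product p. *)
definition Fmap_kderiv :: "nat \<Rightarrow> complex^2 \<Rightarrow> complex^2 \<Rightarrow> complex^2" where
  "Fmap_kderiv k u p = (\<chi> i. if i = 1
     then pow_kderiv 6 k (u$1) * p$1 + 44/31 * pow_kderiv 3 k (u$2) * p$2 - pow_kderiv 1 k (u$2) * p$2
     else pow_kderiv 6 k (u$2) * p$2 + 44/31 * pow_kderiv 3 k (u$1) * p$1 - pow_kderiv 1 k (u$1) * p$1)"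

lemma has_derivative_Fmap_kderiv:
  "((\<lambda>u. Fmap_kderiv k u (componentwise_prod vs)) has_derivative
     (\<lambda>h. Fmap_kderiv (Suc k) u (componentwise_prod (h # vs)))) (at u)"
  unfolding Fmap_kderiv_def componentwise_prod_Cons
proof (rule has_derivative_vec_lambda, goal_cases)
  case (1 i)
  then show ?case by (cases "i = 1") (auto intro!: derivative_eq_intros simp: algebra_simps)
qed

lemma Fmap_kderiv_0: "Fmap_kderiv 0 u (componentwise_prod []) = Fmap u"
  by (simp add: vec_eq_iff Fmap_kderiv_def Fmap_def componentwise_prod_def)

lemma kderiv_Fmap:
  "length vs = k \<Longrightarrow> kderiv k Fmap u vs = Fmap_kderiv k u (componentwise_prod vs)"
proof (induction k arbitrary: u vs)
  case 0
  then show ?case by (simp add: Fmap_kderiv_0)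
next
  case (Suc k)
  then obtain h t where vs: "vs = h # t" and "length t = k"
    by (cases vs) auto
  with Suc.IH have "kderiv (Suc k) Fmap u vs =
      frechet_derivative (\<lambda>w. Fmap_kderiv k w (componentwise_prod t)) (at u) h"
    by simp
  also have "\<dots> = Fmap_kderiv (Suc k) u (componentwise_prod vs)"
    unfolding vs by (metis frechet_derivative_at has_derivative_Fmap_kderiv)
  finally show ?case .
qed

lemma has_derivative_Fmap: "(Fmap has_derivative (\<lambda>h. Jmat u *v h)) (at u)"
proof -
  have "Fmap_kderiv 1 u (componentwise_prod [h]) = Jmat u *v h" for h
    by (simp add: vec_eq_iff forall_2 Fmap_kderiv_def pow_kderiv_def componentwise_prod_def
        Jmat_def matrix_vector_mult_def sum_2 numeral_eq_Suc algebra_simps)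
  then show ?thesis
    using has_derivative_Fmap_kderiv[of 0 "[]" u] by (simp add: Fmap_kderiv_0)
qed

lemma frechet_derivative_Fmap: "frechet_derivative Fmap (at z) = (\<lambda>h. Jmat z *v h)"
  by (rule frechet_derivative_at[OF has_derivative_Fmap, symmetric])

lemma Fmap_kderiv_eq_Mk:
  assumes "2 \<le> k"
  shows "Fmap_kderiv k u p = fact k *\<^sub>R (Mk k u *v p)"
  using assms
  by (simp add: vec_eq_iff forall_2 Fmap_kderiv_def pow_kderiv_def Mk_def matrix_vector_mult_def
      sum_2 binomial_eq_0 scaleR_conv_of_real[where 'a=complex] algebra_simps)

lemma Mk_eq_0: "6 < k \<Longrightarrow> Mk k z = 0"
  by (simp add: Mk_def vec_eq_iff binomial_eq_0)

lemma normalized_kderiv_Fmap: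
  assumes "invertible (Jmat z)" "2 \<le> k" "length vs = k"
  shows "(1 / fact k) *\<^sub>R inv (frechet_derivative Fmap (at z)) (kderiv k Fmap z vs)
    = (matrix_inv (Jmat z) ** Mk k z) *v componentwise_prod vs"
  using assms
  by (simp add: frechet_derivative_Fmap inv_matrix_vector_mult kderiv_Fmap Fmap_kderiv_eq_Mk
      matrix_vector_mult_scaleR_gen matrix_vector_mul_assoc)

lemma norm_normalized_kderiv_Fmap_le:
  assumes "invertible (Jmat z)" "2 \<le> k" "length vs = k"
  shows "norm ((1 / fact k) *\<^sub>R inv (frechet_derivative Fmap (at z)) (kderiv k Fmap z vs))
    \<le> sigma_max (matrix_inv (Jmat z) ** Mk k z) * (\<Prod>v\<leftarrow>vs. norm v)"
proof -
  let ?A = "matrix_inv (Jmat z) ** Mk k z"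
  have "norm ((1 / fact k) *\<^sub>R inv (frechet_derivative Fmap (at z)) (kderiv k Fmap z vs))
      = norm (?A *v componentwise_prod vs)"
    by (simp add: normalized_kderiv_Fmap[OF assms])
  also have "\<dots> \<le> sigma_max ?A * norm (componentwise_prod vs)"
    by (rule norm_le_sigma_max)
  also have "\<dots> \<le> sigma_max ?A * (\<Prod>v\<leftarrow>vs. norm v)"
    using assms by (intro mult_left_mono norm_componentwise_prod_le norm_le_sigma_max(1)) auto
  finally show ?thesis .
qed

theorem proposition5p1:
  fixes z :: "complex^2"
  assumes "invertible (Jmat z)"
    and "\<forall>k\<in>{2..6::nat}. sigma_max (matrix_inv (Jmat z) ** Mk k z)
           < (0.03 / norm (matrix_inv (Jmat z) *v Fmap z)) ^ (k - 1)"
  shows "smale_alpha Fmap z < 0.03"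
proof -
  define \<beta> where "\<beta> = norm (matrix_inv (Jmat z) *v Fmap z)"
  have beta: "smale_beta Fmap z = \<beta>"
    unfolding smale_beta_def \<beta>_def frechet_derivative_Fmap inv_matrix_vector_mult[OF assms(1)] ..
  show ?thesis
  proof (cases "\<beta> = 0")
    case True
    then show ?thesis by (simp add: smale_alpha_def beta)
  next
    case False
    then have "0 < \<beta>"
      by (simp add: \<beta>_def)
    have "smale_gamma Fmap z < 0.03 / \<beta>"
    proof (rule smale_gamma_less[where c = "\<lambda>k. sigma_max (matrix_inv (Jmat z) ** Mk k z)" and n = 6])
      show "sigma_max (matrix_inv (Jmat z) ** Mk k z) < (0.03 / \<beta>) ^ (k - 1)" if "2 \<le> k" for k
        using that assms(2) \<open>0 < \<beta>\<close> Mk_eq_0[of k z] unfolding \<beta>_def by (cases "k \<le> 6") auto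
    qed (use assms(1) \<open>0 < \<beta>\<close> Mk_eq_0 norm_normalized_kderiv_Fmap_le in auto)
    with \<open>0 < \<beta>\<close> show ?thesis
      by (simp add: smale_alpha_def beta pos_less_divide_eq mult_ac)
  qed
qed

end
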